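(* Let $F$ be a commutative field, $1\le h\le n-1$, and let $K$ be a linear complex of $h$-subspaces in $\mathrm{PG}(n,F)$. If $U_1\neq U_2$ are singular $(h-1)$-subspaces of $K$ which are collinear in $\Gamma(n,h-1,F)$ (i.e. $\dim(U_1\cap U_2)=h-2$), then every element of the pencil of $(h-1)$-subspaces determined by $U_1$ and $U_2$ (all $(h-1)$-subspaces containing $U_1\cap U_2$ and contained in $U_1\vee U_2$) is a singular $(h-1)$-subspace of $K$.
   Context: A $d$-subspace is a projective subspace of dimension $d$; $\vee$ denotes join. A linear complex of $h$-subspaces is the set of $h$-subspaces whose Plücker coordinates (image of the span of $v_0,\dots,v_h$ as $F(v_0\wedge\dots\wedge v_h)$ in $\mathbb P(\bigwedge^{h+1}F^{n+1})$) lie in a fixed hyperplane of $\mathbb P(\bigwedge^{h+1}F^{n+1})$. An $(h-1)$-subspace $U$ is singular for $K$ if every $h$-subspace containing $U$ belongs to $K$. $\Gamma(n,h-1,F)$ is the Grassmannian whose points are the $(h-1)$-subspaces and whose lines are pencils of $(h-1)$-subspaces. *)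

theory Defs
  imports "HOL-Analysis.Analysis"
begin

text \<open>Projective space PG(n,F) is modelled on the vector space F^(n+1) = 'a^'n with
  CARD('n) = n+1. A projective d-subspace is a linear subspace of vector dimension d+1.\<close>

definition proj_subspace :: "nat \<Rightarrow> ('a::field ^ 'n) set \<Rightarrow> bool" where
  "proj_subspace d S \<longleftrightarrow> vec.subspace S \<and> vec.dim S = d + 1"

definition proj_join :: "('a::field ^ 'n) set \<Rightarrow> ('a ^ 'n) set \<Rightarrow> ('a ^ 'n) set" where
  "proj_join U W = vec.span (U \<union> W)"

text \<open>Alternating (h+1)-linear forms on F^(n+1), with arguments indexed by 0..h.
  These are exactly the linear functionals on the exterior power of degree h+1.\<close>

definition alt_multilinear :: "nat \<Rightarrow> ((nat \<Rightarrow> 'a::field ^ 'n) \<Rightarrow> 'a) \<Rightarrow> bool" where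
  "alt_multilinear h f \<longleftrightarrow>
     (\<forall>v w. (\<forall>i\<le>h. v i = w i) \<longrightarrow> f v = f w) \<and>
     (\<forall>v i x y a b. i \<le> h \<longrightarrow>
        f (v(i := a *s x + b *s y)) = a * f (v(i := x)) + b * f (v(i := y))) \<and>
     (\<forall>v i j. i \<le> h \<longrightarrow> j \<le> h \<longrightarrow> i \<noteq> j \<longrightarrow> v i = v j \<longrightarrow> f v = 0)"

text \<open>The Pluecker coordinates F(v_0 \<and> ... \<and> v_h) of the span S of v_0..v_h lie in the
  hyperplane given by the functional corresponding to f.\<close>

definition plucker_in_hyperplane ::
  "nat \<Rightarrow> ((nat \<Rightarrow> 'a::field ^ 'n) \<Rightarrow> 'a) \<Rightarrow> ('a ^ 'n) set \<Rightarrow> bool" where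
  "plucker_in_hyperplane h f S \<longleftrightarrow>
     (\<exists>v. (\<forall>i\<le>h. v i \<in> S) \<and> vec.span (v ` {0..h}) = S \<and> f v = 0)"

definition linear_complex ::
  "nat \<Rightarrow> ((nat \<Rightarrow> 'a::field ^ 'n) \<Rightarrow> 'a) \<Rightarrow> ('a ^ 'n) set set" where
  "linear_complex h f = {S. proj_subspace h S \<and> plucker_in_hyperplane h f S}"

definition is_linear_complex :: "nat \<Rightarrow> ('a::field ^ 'n) set set \<Rightarrow> bool" where
  "is_linear_complex h K \<longleftrightarrow>
     (\<exists>f. alt_multilinear h f \<and> (\<exists>v. f v \<noteq> 0) \<and> K = linear_complex h f)"

definition singular :: "nat \<Rightarrow> ('a::field ^ 'n) set set \<Rightarrow> ('a ^ 'n) set \<Rightarrow> bool" where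
  "singular h K U \<longleftrightarrow> proj_subspace (h - 1) U \<and>
     (\<forall>S. proj_subspace h S \<and> U \<subseteq> S \<longrightarrow> S \<in> K)"

end

theory Submission
  imports Defs
begin

text \<open>Let \<open>f\<close> be the alternating form defining \<open>K\<close>. An \<open>h\<close>-subspace lies in \<open>K\<close> iff \<open>f\<close> vanishes on
  one (equivalently every) tuple of its vectors, so \<open>f\<close> vanishes whenever its first \<open>h\<close>
  arguments lie in a singular \<open>U\<close>. For an \<open>h\<close>-subspace \<open>S \<supseteq> W\<close> choose a spanning tuple whose first
  \<open>h - 1\<close> vectors span \<open>U\<^sub>1 \<inter> U\<^sub>2\<close> and whose next vector \<open>c\<close> lies in \<open>W \<subseteq> U\<^sub>1 \<or> U\<^sub>2\<close>. Writing
  \<open>c = u\<^sub>1 + u\<^sub>2\<close> with \<open>u\<^sub>i \<in> U\<^sub>i\<close> and using linearity in that slot, \<open>f\<close> of the tuple is a sum of two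
  values that vanish by the singularity of \<open>U\<^sub>1\<close> and \<open>U\<^sub>2\<close>.\<close>

lemma alt_multilinear_add:
  assumes "alt_multilinear h f" "i \<le> h"
  shows "f (v(i := x + y)) = f (v(i := x)) + f (v(i := y))"
proof -
  have "f (v(i := 1 *s x + 1 *s y)) = 1 * f (v(i := x)) + 1 * f (v(i := y))"
    using assms unfolding alt_multilinear_def by blast
  then show ?thesis by simp
qed

lemma alt_multilinear_scale:
  assumes "alt_multilinear h f" "i \<le> h"
  shows "f (v(i := c *s x)) = c * f (v(i := x))"
proof -
  have "f (v(i := c *s x + 0 *s x)) = c * f (v(i := x)) + 0 * f (v(i := x))"
    using assms unfolding alt_multilinear_def by blast
  then show ?thesis by simp
qed

lemma alt_multilinear_cong:
  assumes "alt_multilinear h f" "\<forall>i\<le>h. v i = w i"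
  shows "f v = f w"
  using assms unfolding alt_multilinear_def by blast

lemma alt_multilinear_repeated:
  assumes "alt_multilinear h f" "i \<le> h" "j \<le> h" "i \<noteq> j" "v i = v j"
  shows "f v = 0"
  using assms unfolding alt_multilinear_def by blast

lemma alt_multilinear_slot_subspace:
  assumes "alt_multilinear h f" "i \<le> h"
  shows "vec.subspace {x. f (v(i := x)) = 0}"
proof -
  have "f (v(i := 0)) = 0"
    using alt_multilinear_scale[OF assms, of v 0 0] by simp
  then show ?thesis
    unfolding vec.subspace_def
    using alt_multilinear_add[OF assms] alt_multilinear_scale[OF assms] by auto
qed

lemma alt_multilinear_swap:
  assumes f: "alt_multilinear h f" and "i \<le> h" "k \<le> h" "i \<noteq> k"
  shows "f (v(i := v k, k := v i)) = - f v"
proof -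
  define g where "g x y = f (v(i := x, k := y))" for x y
  have add_right: "g z (x + y) = g z x + g z y" for x y z
    unfolding g_def using alt_multilinear_add[OF f \<open>k \<le> h\<close>, of "v(i := z)"] by simp
  have add_left: "g (x + y) z = g x z + g y z" for x y z
    unfolding g_def using alt_multilinear_add[OF f \<open>i \<le> h\<close>, of "v(k := z)"] \<open>i \<noteq> k\<close>
    by (simp add: fun_upd_twist)
  have diag: "g x x = 0" for x
    unfolding g_def using \<open>i \<noteq> k\<close>
    by (intro alt_multilinear_repeated[OF f \<open>i \<le> h\<close> \<open>k \<le> h\<close> \<open>i \<noteq> k\<close>]) simp
  have "0 = g (v k + v i) (v k + v i)" using diag by simp
  also have "\<dots> = g (v k) (v k + v i) + g (v i) (v k + v i)" by (rule add_left)
  also have "\<dots> = g (v k) (v i) + g (v i) (v k)" using add_right diag by simp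
  finally have "g (v k) (v i) = - g (v i) (v k)"
    by (simp add: eq_neg_iff_add_eq_0)
  then show ?thesis unfolding g_def by simp
qed

lemma alt_multilinear_reindex_eq_zero:
  assumes f: "alt_multilinear h f" and "f w = 0" and "\<sigma> ` {0..h} \<subseteq> {0..h}"
  shows "f (w \<circ> \<sigma>) = 0"
  using assms(3)
proof (induction "card {i\<in>{0..h}. \<sigma> i \<noteq> i}" arbitrary: \<sigma> rule: less_induct)
  case less
  show ?case
  proof (cases "\<forall>i\<le>h. \<sigma> i = i")
    case True
    then show ?thesis using alt_multilinear_cong[OF f, of "w \<circ> \<sigma>" w] \<open>f w = 0\<close> by simp
  next
    case False
    then obtain i where i: "i \<le> h" "\<sigma> i \<noteq> i" by auto
    show ?thesis
    proof (cases "inj_on \<sigma> {0..h}")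
      case False
      then obtain p q where "p \<le> h" "q \<le> h" "p \<noteq> q" "\<sigma> p = \<sigma> q"
        unfolding inj_on_def by auto
      then show ?thesis by (intro alt_multilinear_repeated[OF f, of p q]) auto
    next
      case True
      then have "\<sigma> ` {0..h} = {0..h}" using less.prems by (simp add: endo_inj_surj)
      then obtain k where k: "k \<le> h" "\<sigma> k = i"
        using i(1) by (metis atLeastAtMost_iff imageE zero_le)
      with i have "k \<noteq> i" by auto
      \<comment> \<open>Composing with the transposition of \<open>i\<close> and \<open>k\<close> fixes \<open>i\<close> and creates no new moved points.\<close>
      define \<tau> where "\<tau> = \<sigma>(i := \<sigma> k, k := \<sigma> i)"
      have "{x\<in>{0..h}. \<tau> x \<noteq> x} \<subset> {x\<in>{0..h}. \<sigma> x \<noteq> x}"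
        unfolding \<tau>_def using i k \<open>k \<noteq> i\<close> by auto
      then have "card {x\<in>{0..h}. \<tau> x \<noteq> x} < card {x\<in>{0..h}. \<sigma> x \<noteq> x}"
        by (intro psubset_card_mono) auto
      moreover have "\<tau> ` {0..h} \<subseteq> {0..h}"
        using less.prems k i unfolding \<tau>_def image_subset_iff by simp
      ultimately have "f (w \<circ> \<tau>) = 0" using less.hyps by blast
      moreover have "w \<circ> \<tau> = (w \<circ> \<sigma>)(i := (w \<circ> \<sigma>) k, k := (w \<circ> \<sigma>) i)"
        unfolding \<tau>_def by (auto simp: fun_eq_iff)
      ultimately show ?thesis
        using alt_multilinear_swap[OF f i(1) k(1) \<open>k \<noteq> i\<close>[symmetric], of "w \<circ> \<sigma>"] by simp
    qed
  qed
qed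

lemma alt_multilinear_eq_zero_on_span:
  assumes f: "alt_multilinear h f" and "f w = 0"
    and u: "\<forall>i\<le>h. u i \<in> vec.span (w ` {0..h})"
  shows "f u = 0"
proof -
  \<comment> \<open>Replace the entries of a tuple of generators by span elements one slot at a time.\<close>
  have "f u = 0"
    if "\<forall>i\<le>h. i < k \<longrightarrow> u i \<in> vec.span (w ` {0..h})" "\<forall>i\<le>h. k \<le> i \<longrightarrow> u i \<in> w ` {0..h}"
    for k u
    using that
  proof (induction k arbitrary: u)
    case 0
    then have "\<forall>i. \<exists>j. i \<le> h \<longrightarrow> j \<in> {0..h} \<and> u i = w j" by (meson imageE le0)
    then have "\<exists>\<sigma>. \<forall>i\<le>h. \<sigma> i \<in> {0..h} \<and> u i = w (\<sigma> i)" by (rule choice)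
    then obtain \<sigma> where \<sigma>: "\<forall>i\<le>h. \<sigma> i \<in> {0..h} \<and> u i = w (\<sigma> i)" by blast
    then have "f u = f (w \<circ> \<sigma>)" by (intro alt_multilinear_cong[OF f]) auto
    also have "\<dots> = 0"
      using \<sigma> by (intro alt_multilinear_reindex_eq_zero[OF f \<open>f w = 0\<close>]) (simp add: image_subset_iff)
    finally show ?case .
  next
    case (Suc k)
    show ?case
    proof (cases "k \<le> h")
      case False
      with Suc.prems show ?thesis by (intro Suc.IH) auto
    next
      case True
      have "\<forall>x\<in>w ` {0..h}. f (u(k := x)) = 0"
        using Suc.prems by (intro ballI Suc.IH) (auto simp: less_Suc_eq)
      then have "f (u(k := u k)) = 0"
        using vec.span_induct[OF _ alt_multilinear_slot_subspace[OF f True]] Suc.prems True by blast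
      then show ?thesis by simp
    qed
  qed
  from this[of "Suc h"] u show ?thesis by auto
qed

lemma linear_complex_vanishes:
  assumes "alt_multilinear h f" "T \<in> linear_complex h f" "\<forall>i\<le>h. u i \<in> T"
  shows "f u = 0"
proof -
  obtain w where "vec.span (w ` {0..h}) = T" "f w = 0"
    using assms(2) unfolding linear_complex_def plucker_in_hyperplane_def by blast
  with assms(1,3) show ?thesis by (intro alt_multilinear_eq_zero_on_span) auto
qed

lemma dim_span_insert_notin:
  fixes A :: "('a::field ^ 'n) set"
  assumes "vec.subspace A" "c \<notin> A"
  shows "vec.dim (vec.span (insert c A)) = vec.dim A + 1"
proof -
  have "c \<notin> vec.span A" using assms vec.span_eq_iff by metis
  then show ?thesis by (simp add: vec.dim_span vec.dim_insert)
qed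

lemma span_insert_of_dim_Suc:
  fixes A B :: "('a::field ^ 'n) set"
  assumes "vec.subspace A" "vec.subspace B" "A \<subseteq> B" "vec.dim B = vec.dim A + 1"
  obtains c where "c \<in> B" "c \<notin> A" "B = vec.span (insert c A)"
proof -
  have "A \<noteq> B" using assms(4) by auto
  then obtain c where c: "c \<in> B" "c \<notin> A" using assms(3) by blast
  have "vec.span (insert c A) \<subseteq> B" using c assms by (intro vec.span_minimal) auto
  then have "vec.span (insert c A) = B"
    using assms dim_span_insert_notin[OF assms(1) c(2)]
    by (intro vec.subspace_dim_equal) (auto simp: vec.subspace_span)
  then show ?thesis using that c by blast
qed

lemma extend_subspace_through:
  fixes U :: "('a::field ^ 'n) set"
  assumes "vec.subspace U" "vec.dim U < CARD('n)"
  obtains T where "vec.subspace T" "vec.dim T = vec.dim U + 1" "U \<subseteq> T" "z \<in> T"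
proof -
  obtain y where y: "y \<notin> U" "z \<in> vec.span (insert y U)"
  proof (cases "z \<in> U")
    case True
    have "U \<noteq> UNIV" using assms vec_dim_card[where 'a='a and 'n='n] by auto
    then obtain y where "y \<notin> U" by blast
    then show ?thesis using that True by (meson subsetD subset_insertI vec.span_superset)
  next
    case False
    then show ?thesis using that by (meson insertI1 vec.span_base)
  qed
  show ?thesis
    using that[of "vec.span (insert y U)"] y dim_span_insert_notin[OF assms(1) y(1)]
    by (meson subset_insertI subset_trans vec.span_superset vec.subspace_span)
qed

lemma singular_vanishes:
  fixes U :: "('a::field ^ 'n) set"
  assumes f: "alt_multilinear h f" and U: "singular h (linear_complex h f) U"
    and "1 \<le> h" "h < CARD('n)" and v: "\<forall>i<h. v i \<in> U"
  shows "f v = 0"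
proof -
  have U': "vec.subspace U" "vec.dim U = h"
    using U \<open>1 \<le> h\<close> unfolding singular_def proj_subspace_def by auto
  obtain T where T: "vec.subspace T" "vec.dim T = h + 1" "U \<subseteq> T" "v h \<in> T"
    by (rule extend_subspace_through[of U "v h"]) (use U' \<open>h < CARD('n)\<close> in auto)
  then have "T \<in> linear_complex h f"
    using U unfolding singular_def proj_subspace_def by blast
  moreover have "\<forall>i\<le>h. v i \<in> T" using v T by (auto simp: le_less)
  ultimately show ?thesis using linear_complex_vanishes[OF f] by blast
qed

lemma flag_adapted_spanning_tuple:
  fixes D W S :: "('a::field ^ 'n) set"
  assumes "vec.subspace D" "vec.subspace W" "vec.subspace S" "D \<subseteq> W" "W \<subseteq> S"
    and "vec.dim W = vec.dim D + 1" "vec.dim S = vec.dim W + 1"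
  obtains v where "\<forall>i<vec.dim D. v i \<in> D" "v (vec.dim D) \<in> W"
    "\<forall>i\<le>Suc (vec.dim D). v i \<in> S" "vec.span (v ` {0..Suc (vec.dim D)}) = S"
proof -
  let ?k = "vec.dim D"
  obtain c where c: "c \<in> W" "W = vec.span (insert c D)"
    by (rule span_insert_of_dim_Suc[OF assms(1,2,4,6)])
  obtain x where x: "x \<in> S" "S = vec.span (insert x W)"
    by (rule span_insert_of_dim_Suc[OF assms(2,3,5,7)])
  obtain B where B: "B \<subseteq> D" "vec.independent B" "D \<subseteq> vec.span B" "card B = ?k"
    by (rule vec.basis_exists[of D])
  then obtain d where d: "bij_betw d {0..<?k} B"
    using ex_bij_betw_nat_finite vec.finiteI_independent by metis
  define v where "v i = (if i < ?k then d i else if i = ?k then c else x)" for i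
  have vD: "v i \<in> D" if "i < ?k" for i
    using d B(1) that unfolding v_def by (auto simp: bij_betw_def)
  have vS: "\<forall>i\<le>Suc ?k. v i \<in> S"
    using vD c(1) x(1) assms(4,5) unfolding v_def by auto
  define V where "V = vec.span (v ` {0..Suc ?k})"
  have V: "vec.subspace V" unfolding V_def by (rule vec.subspace_span)
  have inV: "v i \<in> V" if "i \<le> Suc ?k" for i
    unfolding V_def using that by (intro vec.span_base) auto
  have "B = d ` {0..<?k}" using d by (simp add: bij_betw_def)
  also have "\<dots> \<subseteq> V"
  proof (rule image_subsetI)
    fix i assume "i \<in> {0..<?k}"
    then show "d i \<in> V" using inV[of i] by (simp add: v_def)
  qed
  finally have "D \<subseteq> V" using B(3) vec.span_minimal[OF _ V] by blast
  moreover have "c \<in> V" using inV[of ?k] by (simp add: v_def)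
  ultimately have "W \<subseteq> V" using c(2) vec.span_minimal[OF _ V] by simp
  moreover have "x \<in> V" using inV[of "Suc ?k"] by (simp add: v_def)
  ultimately have "S \<subseteq> V" using x(2) vec.span_minimal[OF _ V] by simp
  moreover have "V \<subseteq> S" unfolding V_def using vS assms(3) by (intro vec.span_minimal) auto
  ultimately have "vec.span (v ` {0..Suc ?k}) = S" unfolding V_def by blast
  moreover have "v ?k \<in> W" using c(1) by (simp add: v_def)
  ultimately show ?thesis using that[of v] vD vS by blast
qed

lemma mem_span_union_subspaces:
  assumes "vec.subspace U1" "vec.subspace U2" "c \<in> vec.span (U1 \<union> U2)"
  obtains u1 u2 where "c = u1 + u2" "u1 \<in> U1" "u2 \<in> U2"
proof -
  have "vec.span U1 = U1" "vec.span U2 = U2"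
    using assms(1,2) by (simp_all add: vec.span_eq_iff)
  then show ?thesis using assms(3) that unfolding vec.span_Un by blast
qed

lemma singular_pair_vanishes:
  fixes U1 U2 :: "('a::field ^ 'n) set"
  assumes f: "alt_multilinear h f"
    and U1: "singular h (linear_complex h f) U1" and U2: "singular h (linear_complex h f) U2"
    and h: "1 \<le> h" "h < CARD('n)"
    and v: "\<forall>i<h - 1. v i \<in> U1 \<inter> U2" "v (h - 1) \<in> vec.span (U1 \<union> U2)"
  shows "f v = 0"
proof -
  have "vec.subspace U1" "vec.subspace U2"
    using U1 U2 unfolding singular_def proj_subspace_def by auto
  then obtain u1 u2 where u: "v (h - 1) = u1 + u2" "u1 \<in> U1" "u2 \<in> U2"
    using mem_span_union_subspaces v(2) by blast
  have "(v(h - 1 := u1)) i \<in> U1" "(v(h - 1 := u2)) i \<in> U2" if "i < h" for i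
    by (cases "i = h - 1") (use v(1) u(2,3) that in auto)
  then have "f (v(h - 1 := u1)) = 0" "f (v(h - 1 := u2)) = 0"
    using singular_vanishes[OF f U1 h] singular_vanishes[OF f U2 h] by blast+
  moreover have "f v = f (v(h - 1 := u1 + u2))" by (simp flip: u(1))
  ultimately show "f v = 0" using alt_multilinear_add[OF f, of "h - 1" v u1 u2] by simp
qed

theorem corollary5p5:
  fixes K :: "('a::field ^ 'n) set set" and n h :: nat and U1 U2 W :: "('a ^ 'n) set"
  assumes "CARD('n) = n + 1"
    and "1 \<le> h" and "h \<le> n - 1"
    and "is_linear_complex h K"
    and "singular h K U1" and "singular h K U2" and "U1 \<noteq> U2"
    and "vec.dim (U1 \<inter> U2) = h - 1"
    and "proj_subspace (h - 1) W" and "U1 \<inter> U2 \<subseteq> W" and "W \<subseteq> proj_join U1 U2"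
  shows "singular h K W"
proof -
  obtain f where f: "alt_multilinear h f" and K: "K = linear_complex h f"
    using assms(4) unfolding is_linear_complex_def by blast
  have D: "vec.subspace (U1 \<inter> U2)"
    using assms(5,6) unfolding singular_def proj_subspace_def by (auto intro: vec.subspace_inter)
  have W: "vec.subspace W" "vec.dim W = vec.dim (U1 \<inter> U2) + 1"
    using assms(2,8,9) unfolding proj_subspace_def by auto
  have h: "h < CARD('n)" "Suc (h - 1) = h" using assms(1-3) by auto
  have "S \<in> K" if S: "proj_subspace h S" "W \<subseteq> S" for S
  proof -
    have S': "vec.subspace S" "vec.dim S = vec.dim W + 1"
      using S W(2) assms(2,8) unfolding proj_subspace_def by auto
    obtain v where v: "\<forall>i<h - 1. v i \<in> U1 \<inter> U2" "v (h - 1) \<in> W"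
        "\<forall>i\<le>h. v i \<in> S" "vec.span (v ` {0..h}) = S"
      by (rule flag_adapted_spanning_tuple[OF D W(1) S'(1) assms(10) S(2) W(2) S'(2),
            unfolded assms(8) h(2)])
    have "f v = 0"
      using singular_pair_vanishes[OF f assms(5,6)[unfolded K] assms(2) h(1) v(1)]
        v(2) assms(11) unfolding proj_join_def by blast
    then show ?thesis
      using S(1) v(3,4) unfolding K linear_complex_def plucker_in_hyperplane_def by blast
  qed
  then show ?thesis using assms(9) unfolding singular_def by blast
qed

end
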